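(* Let $A\in\mathcal A$ and let $\{q_n\}\subset\mathcal K$ satisfy $|\bar q_n|\to\infty$. Then $\displaystyle\lim_{n\to\infty}\int_0^T\dot q_n(t)\cdot A(t,q_n(t))\,dt=0$.
   Context: $T>0$ fixed. $\mathcal A$ is the set of $A\in\mathcal C^1(\mathbb R^4;\mathbb R^3)$, $A=A(t,x)$, $T$-periodic in $t$, with $\partial_tA\not\equiv0$ and $\lim_{|x|\to\infty}(|\partial_tA(t,x)|+|\nabla A(t,x)|)=0$ uniformly in $t$ ($\nabla A$ = spatial Jacobian). $\mathcal W$ = Lipschitz $T$-periodic $q:\mathbb R\to\mathbb R^3$; $\mathcal K=\{q\in\mathcal W:\|\dot q\|_\infty\le1\}$; $\bar q=\frac1T\int_0^Tq(t)dt$. *)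

theory Defs
  imports "HOL-Analysis.Analysis"
begin

text \<open>C^1 on R^4 = R x R^3: everywhere Frechet differentiable with continuous derivative D.
  The partial t-derivative is D(t,x)(1,0), the spatial Jacobian is h \<mapsto> D(t,x)(0,h).\<close>

definition class_A :: "real \<Rightarrow> (real \<Rightarrow> real^3 \<Rightarrow> real^3) \<Rightarrow> bool" where
  "class_A T A \<longleftrightarrow>
     (\<exists>D :: real \<times> (real^3) \<Rightarrow> (real \<times> (real^3)) \<Rightarrow>\<^sub>L (real^3).
        (\<forall>p. ((\<lambda>p. A (fst p) (snd p)) has_derivative blinfun_apply (D p)) (at p))
      \<and> continuous_on UNIV D
      \<and> (\<forall>t x. A (t + T) x = A t x)
      \<and> (\<exists>t x. blinfun_apply (D (t, x)) (1, 0) \<noteq> 0)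
      \<and> (\<forall>e>0. \<exists>R. \<forall>t x. norm x \<ge> R \<longrightarrow>
            norm (blinfun_apply (D (t, x)) (1, 0))
            + onorm (\<lambda>h. blinfun_apply (D (t, x)) (0, h)) < e))"

definition in_K :: "real \<Rightarrow> (real \<Rightarrow> real^3) \<Rightarrow> (real \<Rightarrow> real^3) \<Rightarrow> bool" where
  "in_K T q qd \<longleftrightarrow>
     (\<exists>L. L-lipschitz_on UNIV q)
   \<and> (\<forall>t. q (t + T) = q t)
   \<and> (AE t in lebesgue. (q has_vector_derivative qd t) (at t))
   \<and> (AE t in lebesgue. norm (qd t) \<le> 1)"

definition mean :: "real \<Rightarrow> (real \<Rightarrow> real^3) \<Rightarrow> real^3" where
  "mean T q = (1 / T) *\<^sub>R integral {0..T} q"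

end

theory Submission
  imports Defs "HOL-Library.Periodic_Fun"
begin

text \<open>Write a(t) = A(t, q(t)). A curve q in K is 1-Lipschitz and T-periodic, so it stays within
  distance T of its mean; once the mean is far out, the whole curve lies where the derivatives of A
  are below e, and a is locally 2e-Lipschitz. Integrating by parts against the periodic a,
  the integral of q'. a equals minus the integral of (q - mean). a', of size at most 2 e T^2.
  As q is only differentiable almost everywhere, the integration by parts is carried out on
  difference quotients (a summation by parts using periodicity) and passed to the limit by
  dominated convergence.\<close>

lemma dominated_convergence_AE:
  fixes f :: "nat \<Rightarrow> 'n::euclidean_space \<Rightarrow> 'm::euclidean_space"
  assumes f: "\<And>k. f k integrable_on S" and h: "h integrable_on S"
    and le: "\<And>k x. x \<in> S \<Longrightarrow> norm (f k x) \<le> h x"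
    and conv: "AE x in lebesgue. (\<lambda>k. f k x) \<longlonglongrightarrow> g x"
  shows "g integrable_on S" "(\<lambda>k. integral S (f k)) \<longlonglongrightarrow> integral S g"
proof -
  obtain N where N: "negligible N" "\<And>x. x \<notin> N \<Longrightarrow> (\<lambda>k. f k x) \<longlonglongrightarrow> g x"
    using conv unfolding eventually_ae_filter_negligible by blast
  define f' where "f' k x = (if x \<in> N then 0 else f k x)" for k x
  define g' where "g' x = (if x \<in> N then 0 else g x)" for x
  have f_int: "f' k integrable_on S" for k
    by (rule integrable_spike[OF f N(1)]) (simp add: f'_def)
  have f_le: "norm (f' k x) \<le> h x" if "x \<in> S" for k x
    using le[OF that, of k] by (auto simp: f'_def intro: order_trans[OF norm_ge_zero])
  have f_conv: "(\<lambda>k. f' k x) \<longlonglongrightarrow> g' x" for x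
    using N(2) by (simp add: f'_def g'_def)
  note lim = dominated_convergence[OF f_int h f_le f_conv]
  show "g integrable_on S"
    by (rule integrable_spike[OF lim(1) N(1)]) (auto simp: g'_def)
  have "integral S (f k) = integral S (f' k)" for k
    by (rule integral_spike[OF N(1)]) (simp add: f'_def)
  moreover have "integral S g = integral S g'"
    by (rule integral_spike[OF N(1)]) (simp add: g'_def)
  ultimately show "(\<lambda>k. integral S (f k)) \<longlonglongrightarrow> integral S g"
    using lim(2) by simp
qed

lemma has_vector_derivative_difference_quotient:
  fixes g :: "real \<Rightarrow> 'a::real_normed_vector"
  assumes "(g has_vector_derivative D) (at x)"
  shows "((\<lambda>h. (g (x + h) - g x) /\<^sub>R h) \<longlongrightarrow> D) (at 0)"
proof -
  have "((\<lambda>h. norm (g (x + h) - g x - h *\<^sub>R D) / norm h) \<longlongrightarrow> 0) (at 0)"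
    using assms by (simp add: has_vector_derivative_def has_derivative_at)
  moreover have "\<forall>\<^sub>F h in at 0.
      norm (g (x + h) - g x - h *\<^sub>R D) / norm h = norm ((g (x + h) - g x) /\<^sub>R h - D)"
  proof (rule eventually_at_filter[THEN iffD2, OF always_eventually], intro allI impI)
    fix h :: real assume "h \<noteq> 0"
    then have "(g (x + h) - g x) /\<^sub>R h - D = (g (x + h) - g x - h *\<^sub>R D) /\<^sub>R h"
      by (simp add: algebra_simps)
    then show "norm (g (x + h) - g x - h *\<^sub>R D) / norm h = norm ((g (x + h) - g x) /\<^sub>R h - D)"
      by (simp add: divide_inverse)
  qed
  ultimately have "((\<lambda>h. norm ((g (x + h) - g x) /\<^sub>R h - D)) \<longlongrightarrow> 0) (at 0)"
    by (rule Lim_transform_eventually)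
  then show ?thesis
    by (simp add: tendsto_norm_zero_iff LIM_zero_iff)
qed

lemma has_vector_derivative_difference_quotient_sequentially:
  fixes g :: "real \<Rightarrow> 'a::real_normed_vector"
  assumes "(g has_vector_derivative D) (at x)" "d \<longlonglongrightarrow> 0" "\<And>k. d k \<noteq> 0"
  shows "(\<lambda>k. (g (x + d k) - g x) /\<^sub>R d k) \<longlonglongrightarrow> D"
  using has_vector_derivative_difference_quotient[OF assms(1)]
  by (rule filterlim_compose) (use assms(2,3) in \<open>auto intro: filterlim_atI\<close>)

lemma lipschitz_difference_quotient_le:
  fixes q :: "real \<Rightarrow> 'a::real_normed_vector"
  assumes "L-lipschitz_on UNIV q" "d \<noteq> 0"
  shows "norm ((q (t + d) - q t) /\<^sub>R d) \<le> L"
proof -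
  have "norm (q (t + d) - q t) \<le> L * \<bar>d\<bar>"
    using lipschitz_onD[OF assms(1), of "t + d" t] by (simp add: dist_norm)
  then have "norm (q (t + d) - q t) / \<bar>d\<bar> \<le> L"
    using assms(2) by (simp add: pos_divide_le_eq)
  then show ?thesis
    by (simp add: divide_inverse_commute)
qed

lemma integrable_continuous_on_UNIV:
  fixes f :: "real \<Rightarrow> 'a::banach"
  assumes "continuous_on UNIV f"
  shows "f integrable_on {a..b}"
  by (rule integrable_continuous_real[OF continuous_on_subset[OF assms]]) simp

lemma integral_difference_quotient_tendsto:
  fixes q :: "real \<Rightarrow> 'a::banach"
  assumes q_cont: "continuous_on UNIV q" and "a \<le> b"
    and d_lim: "d \<longlonglongrightarrow> 0" and d_pos: "\<And>k. d k > 0"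
  shows "(\<lambda>k. integral {a..b} (\<lambda>u. (q (u + d k) - q u) /\<^sub>R d k)) \<longlonglongrightarrow> q b - q a"
proof -
  define Q where "Q u = integral {a - 1..u} q" for u
  have Q_der: "(Q has_vector_derivative q x) (at x)" if "a - 1 < x" for x
  proof -
    have "(Q has_vector_derivative q x) (at x within {a - 1..x + 1})"
      unfolding Q_def using that
      by (intro integral_has_vector_derivative continuous_on_subset[OF q_cont]) auto
    moreover have "at x within {a - 1..x + 1} = at x"
      using that by (intro at_within_interior) auto
    ultimately show ?thesis
      by simp
  qed
  have q_integral: "(q has_integral (Q v - Q u)) {u..v}" if "a - 1 < u" "u \<le> v" for u v
    using that by (intro fundamental_theorem_of_calculus ballI has_vector_derivative_at_within[OF Q_der]) auto
  have dq_integral: "((\<lambda>u. (q (u + d k) - q u) /\<^sub>R d k) has_integral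
      (Q (b + d k) - Q b) /\<^sub>R d k - (Q (a + d k) - Q a) /\<^sub>R d k) {a..b}" for k
  proof -
    have "((q \<circ> (+) (d k)) has_integral (Q (b + d k) - Q (a + d k))) {a..b}"
      unfolding has_integral_shift_Icc_real using d_pos[of k] \<open>a \<le> b\<close>
      by (intro q_integral) (auto simp: add.commute)
    from has_integral_diff[OF this q_integral[of a b]]
    have "((\<lambda>u. q (u + d k) - q u) has_integral (Q (b + d k) - Q (a + d k) - (Q b - Q a))) {a..b}"
      using \<open>a \<le> b\<close> by (simp add: o_def add.commute)
    from has_integral_cmul[OF this, of "inverse (d k)"] show ?thesis
      by (simp add: algebra_simps)
  qed
  have "(\<lambda>k. (Q (b + d k) - Q b) /\<^sub>R d k - (Q (a + d k) - Q a) /\<^sub>R d k) \<longlonglongrightarrow> q b - q a"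
    using d_lim d_pos \<open>a \<le> b\<close>
    by (intro tendsto_diff has_vector_derivative_difference_quotient_sequentially Q_der)
      (auto simp: less_imp_neq[symmetric])
  then show ?thesis
    by (simp only: integral_unique[OF dq_integral])
qed

lemma lipschitz_has_integral_derivative:
  fixes q qd :: "real \<Rightarrow> 'a::euclidean_space"
  assumes lip: "L-lipschitz_on UNIV q"
    and der: "AE t in lebesgue. (q has_vector_derivative qd t) (at t)"
    and "a \<le> b"
  shows "(qd has_integral (q b - q a)) {a..b}"
proof -
  define d where "d k = 1 / real (Suc k)" for k
  have d_pos: "d k > 0" for k
    by (simp add: d_def)
  have d_lim: "d \<longlonglongrightarrow> 0"
    unfolding d_def by (rule LIMSEQ_Suc[OF lim_const_over_n])
  have q_cont: "continuous_on UNIV q"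
    using lip by (rule lipschitz_on_continuous_on)
  define f where "f k u = (q (u + d k) - q u) /\<^sub>R d k" for k u
  have f_int: "f k integrable_on {a..b}" for k
    unfolding f_def
    by (intro integrable_continuous_on_UNIV
        continuous_intros continuous_on_compose2[OF q_cont] q_cont) auto
  have f_le: "norm (f k u) \<le> L" for k u
    unfolding f_def by (rule lipschitz_difference_quotient_le[OF lip]) (use d_pos[of k] in simp)
  have f_lim: "AE u in lebesgue. (\<lambda>k. f k u) \<longlonglongrightarrow> qd u"
    using der
  proof eventually_elim
    case (elim u)
    show ?case
      unfolding f_def
      by (rule has_vector_derivative_difference_quotient_sequentially[OF elim d_lim])
        (use d_pos in \<open>simp add: less_imp_neq[symmetric]\<close>)
  qed
  note lim = dominated_convergence_AE[OF f_int integrable_const_ivl f_le f_lim]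
  have "integral {a..b} qd = q b - q a"
    using lim(2) integral_difference_quotient_tendsto[OF q_cont \<open>a \<le> b\<close> d_lim d_pos]
    unfolding f_def by (rule LIMSEQ_unique)
  then show ?thesis
    using lim(1) by (metis has_integral_integrable_integral)
qed

lemma in_K_lipschitz:
  assumes "in_K T q qd"
  shows "1-lipschitz_on UNIV q"
proof -
  obtain L where lip: "L-lipschitz_on UNIV q"
    and der: "AE t in lebesgue. (q has_vector_derivative qd t) (at t)"
    and "AE t in lebesgue. norm (qd t) \<le> 1"
    using assms unfolding in_K_def by blast
  then obtain N where N: "negligible N" "\<And>t. t \<notin> N \<Longrightarrow> norm (qd t) \<le> 1"
    unfolding eventually_ae_filter_negligible by blast
  have increment_le: "norm (q y - q x) \<le> y - x" if "x \<le> y" for x y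
  proof -
    define qd' where "qd' t = (if t \<in> N then 0 else qd t)" for t
    have "(qd' has_integral (q y - q x)) {x..y}"
      by (rule has_integral_spike[OF N(1) _ lipschitz_has_integral_derivative[OF lip der that]])
        (simp add: qd'_def)
    moreover have "norm (qd' t) \<le> 1" for t
      using N(2) by (simp add: qd'_def)
    ultimately show ?thesis
      using has_integral_bound[of 1 qd' "q y - q x" x y] that by simp
  qed
  have "dist (q s) (q t) \<le> 1 * dist s t" for s t
    using increment_le[of s t] increment_le[of t s]
    by (cases "t \<le> s") (auto simp: dist_norm norm_minus_commute)
  then show ?thesis
    by (rule lipschitz_onI) simp
qed

lemma periodic_value_in_period:
  fixes f :: "real \<Rightarrow> 'a"
  assumes "T > 0" and "\<And>t. f (t + T) = f t"
  obtains s where "s \<in> {0..T}" "f t = f s"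
proof
  interpret periodic_fun_simple f T
    using assms(2) by unfold_locales
  show "f t = f (t - of_int \<lfloor>t / T\<rfloor> * T)"
    by (simp add: minus_of_int)
  show "t - of_int \<lfloor>t / T\<rfloor> * T \<in> {0..T}"
    using floor_divide_lower[OF assms(1), of t] floor_divide_upper[OF assms(1), of t]
    by (simp add: algebra_simps)
qed

lemma lipschitz_periodic_dist_mean_le:
  fixes q :: "real \<Rightarrow> real^3"
  assumes T: "T > 0" and lip: "L-lipschitz_on UNIV q" and q_per: "\<And>t. q (t + T) = q t"
  shows "norm (q t - mean T q) \<le> L * T"
proof -
  obtain s where s: "s \<in> {0..T}" "q t = q s"
    using T q_per by (rule periodic_value_in_period)
  have q_int: "q integrable_on {0..T}"
    by (rule integrable_continuous_on_UNIV[OF lipschitz_on_continuous_on[OF lip]])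
  have "q s - mean T q = (1 / T) *\<^sub>R (T *\<^sub>R q s - integral {0..T} q)"
    using T by (simp add: mean_def algebra_simps)
  also have "T *\<^sub>R q s - integral {0..T} q = integral {0..T} (\<lambda>u. q s - q u)"
    using T by (simp add: integral_diff[OF integrable_const_ivl q_int])
  finally have "norm (q s - mean T q) = norm (integral {0..T} (\<lambda>u. q s - q u)) / T"
    using T by simp
  also have "\<dots> \<le> (L * T * T) / T"
  proof (rule divide_right_mono)
    have "norm (q s - q u) \<le> L * T" if "u \<in> {0..T}" for u
    proof -
      have "norm (q s - q u) \<le> L * \<bar>s - u\<bar>"
        using lipschitz_onD[OF lip, of s u] by (simp add: dist_norm)
      also have "\<dots> \<le> L * T"
        using lipschitz_on_nonneg[OF lip] s(1) that by (intro mult_left_mono) auto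
      finally show ?thesis .
    qed
    then have "norm (integral {0..T} (\<lambda>u. q s - q u)) \<le> integral {0..T} (\<lambda>_. L * T)"
      by (intro integral_norm_bound_integral integrable_diff integrable_const_ivl q_int)
    then show "norm (integral {0..T} (\<lambda>u. q s - q u)) \<le> L * T * T"
      using T by (simp add: mult_ac)
  qed (use T in simp)
  finally show ?thesis
    using T s(2) by simp
qed

lemma integral_periodic_shift:
  fixes f :: "real \<Rightarrow> 'a::banach"
  assumes f_int: "\<And>u v. f integrable_on {u..v}" and per: "\<And>t. f (t + T) = f t"
    and "0 \<le> e" "e \<le> T"
  shows "integral {0..T} (\<lambda>t. f (t + e)) = integral {0..T} f"
proof -
  have "integral {0..T} (\<lambda>t. f (t + e)) = integral {e..T + e} f"
    using integral_shift_Icc_real[of 0 T f e] by (simp add: o_def add.commute)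
  also have "\<dots> = integral {e..T} f + integral {T..T + e} f"
    using assms by (intro Henstock_Kurzweil_Integration.integral_combine[symmetric] f_int) auto
  also have "integral {T..T + e} f = integral {0..e} f"
    using integral_shift_Icc_real[of 0 e f T] by (simp add: o_def add.commute per)
  also have "integral {e..T} f + integral {0..e} f = integral {0..T} f"
    using assms
    by (subst add.commute) (intro Henstock_Kurzweil_Integration.integral_combine f_int; auto)
  finally show ?thesis .
qed

lemma integral_periodic_difference_inner:
  fixes q a :: "real \<Rightarrow> 'a::euclidean_space"
  assumes q_cont: "continuous_on UNIV q" and a_cont: "continuous_on UNIV a"
    and q_per: "\<And>t. q (t + T) = q t" and a_per: "\<And>t. a (t + T) = a t"
    and "0 \<le> d" "d \<le> T"
  shows "integral {0..T} (\<lambda>t. (q (t + d) - q t) \<bullet> a t)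
    = integral {0..T} (\<lambda>t. (q (t + d) - c) \<bullet> (a t - a (t + d)))"
proof -
  have shift_cont: "continuous_on UNIV (\<lambda>t. f (t + d))"
    if "continuous_on UNIV f" for f :: "real \<Rightarrow> 'b::topological_space"
    by (rule continuous_on_compose2[OF that]) (auto intro: continuous_intros)
  define p where "p t = q t \<bullet> a t" for t
  define r where "r t = c \<bullet> a t" for t
  have p_cont: "continuous_on UNIV p" and r_cont: "continuous_on UNIV r"
    unfolding p_def r_def by (intro continuous_intros q_cont a_cont)+
  have main_cont: "continuous_on UNIV (\<lambda>t. (q (t + d) - c) \<bullet> (a t - a (t + d)))"
    by (intro continuous_intros shift_cont q_cont a_cont)
  have shift_zero: "integral {0..T} (\<lambda>t. f (t + d) - f t) = 0"
    if "continuous_on UNIV f" "\<And>t. f (t + T) = f t" for f :: "real \<Rightarrow> real"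
    using integral_periodic_shift[OF integrable_continuous_on_UNIV[OF that(1)] that(2)
        \<open>0 \<le> d\<close> \<open>d \<le> T\<close>]
    by (simp add: integral_diff integrable_continuous_on_UNIV shift_cont that(1))
  have "(q (t + d) - q t) \<bullet> a t
      = (q (t + d) - c) \<bullet> (a t - a (t + d)) + (p (t + d) - p t) - (r (t + d) - r t)" for t
    by (simp add: p_def r_def inner_diff_left inner_diff_right)
  then have "integral {0..T} (\<lambda>t. (q (t + d) - q t) \<bullet> a t)
      = integral {0..T} (\<lambda>t. (q (t + d) - c) \<bullet> (a t - a (t + d)))
        + integral {0..T} (\<lambda>t. p (t + d) - p t) - integral {0..T} (\<lambda>t. r (t + d) - r t)"
    by (simp add: integral_add integral_diff integrable_continuous_on_UNIV main_cont p_cont r_cont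
        shift_cont continuous_on_add continuous_on_diff)
  also have "\<dots> = integral {0..T} (\<lambda>t. (q (t + d) - c) \<bullet> (a t - a (t + d)))"
    using shift_zero[OF p_cont] shift_zero[OF r_cont] by (simp add: p_def r_def q_per a_per)
  finally show ?thesis .
qed

lemma periodic_difference_inner_integral_le:
  fixes q a :: "real \<Rightarrow> 'a::euclidean_space"
  assumes q_cont: "continuous_on UNIV q" and a_cont: "continuous_on UNIV a"
    and q_per: "\<And>t. q (t + T) = q t" and a_per: "\<And>t. a (t + T) = a t"
    and a_incr: "\<And>t. norm (a t - a (t + d)) \<le> K * d"
    and q_near: "\<And>t. norm (q t - c) \<le> B"
    and "0 \<le> d" "d \<le> T"
  shows "\<bar>integral {0..T} (\<lambda>t. (q (t + d) - q t) \<bullet> a t)\<bar> \<le> K * B * T * d"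
proof -
  have "\<bar>integral {0..T} (\<lambda>t. (q (t + d) - q t) \<bullet> a t)\<bar>
      = norm (integral {0..T} (\<lambda>t. (q (t + d) - c) \<bullet> (a t - a (t + d))))"
    using integral_periodic_difference_inner[OF q_cont a_cont q_per a_per \<open>0 \<le> d\<close> \<open>d \<le> T\<close>]
    by simp
  also have "\<dots> \<le> integral {0..T} (\<lambda>t. B * (K * d))"
  proof (rule integral_norm_bound_integral)
    show "(\<lambda>t. (q (t + d) - c) \<bullet> (a t - a (t + d))) integrable_on {0..T}"
      by (intro integrable_continuous_on_UNIV continuous_intros
          continuous_on_compose2[OF q_cont] continuous_on_compose2[OF a_cont] a_cont) auto
    show "norm ((q (t + d) - c) \<bullet> (a t - a (t + d))) \<le> B * (K * d)" for t
      unfolding real_norm_def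
      by (intro order_trans[OF Cauchy_Schwarz_ineq2] mult_mono q_near a_incr
          order_trans[OF norm_ge_zero q_near]) auto
  qed (rule integrable_const_ivl)
  also have "\<dots> = K * B * T * d"
    using \<open>0 \<le> d\<close> \<open>d \<le> T\<close> by simp
  finally show ?thesis .
qed

lemma lipschitz_integral_inner_difference_quotient_tendsto:
  fixes q qd a :: "real \<Rightarrow> 'a::euclidean_space"
  assumes lip: "L-lipschitz_on UNIV q"
    and der: "AE t in lebesgue. (q has_vector_derivative qd t) (at t)"
    and a_cont: "continuous_on UNIV a" and d_lim: "d \<longlonglongrightarrow> 0" and d_pos: "\<And>k. d k > 0"
  shows "(\<lambda>k. integral {u..v} (\<lambda>t. ((q (t + d k) - q t) /\<^sub>R d k) \<bullet> a t))
    \<longlonglongrightarrow> integral {u..v} (\<lambda>t. qd t \<bullet> a t)"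
proof -
  have q_cont: "continuous_on UNIV q"
    using lip by (rule lipschitz_on_continuous_on)
  have "bounded (a ` {u..v})"
    by (intro compact_imp_bounded compact_continuous_image continuous_on_subset[OF a_cont]) auto
  then obtain M where M: "\<And>t. t \<in> {u..v} \<Longrightarrow> norm (a t) \<le> M"
    unfolding bounded_iff by blast
  define f where "f k t = ((q (t + d k) - q t) /\<^sub>R d k) \<bullet> a t" for k t
  have f_int: "f k integrable_on {u..v}" for k
    unfolding f_def
    by (intro integrable_continuous_on_UNIV continuous_intros
        continuous_on_compose2[OF q_cont] q_cont a_cont) auto
  have f_le: "norm (f k t) \<le> L * M" if "t \<in> {u..v}" for k t
  proof -
    have "norm ((q (t + d k) - q t) /\<^sub>R d k) \<le> L"
      by (rule lipschitz_difference_quotient_le[OF lip]) (use d_pos[of k] in simp)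
    then show ?thesis
      unfolding f_def real_norm_def using lipschitz_on_nonneg[OF lip]
      by (intro order_trans[OF Cauchy_Schwarz_ineq2] mult_mono M[OF that]) auto
  qed
  have f_lim: "AE t in lebesgue. (\<lambda>k. f k t) \<longlonglongrightarrow> qd t \<bullet> a t"
    using der
  proof eventually_elim
    case (elim t)
    have "(\<lambda>k. (q (t + d k) - q t) /\<^sub>R d k) \<longlonglongrightarrow> qd t"
      by (rule has_vector_derivative_difference_quotient_sequentially[OF elim d_lim])
        (use d_pos in \<open>simp add: less_imp_neq[symmetric]\<close>)
    then show ?case
      unfolding f_def by (intro tendsto_inner tendsto_const)
  qed
  show ?thesis
    using dominated_convergence_AE(2)[OF f_int integrable_const_ivl f_le f_lim] by (simp add: f_def)
qed

lemma periodic_integral_inner_derivative_le: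
  fixes q qd a :: "real \<Rightarrow> 'a::euclidean_space"
  assumes T: "T > 0"
    and lip: "L-lipschitz_on UNIV q" and q_per: "\<And>t. q (t + T) = q t"
    and der: "AE t in lebesgue. (q has_vector_derivative qd t) (at t)"
    and a_cont: "continuous_on UNIV a" and a_per: "\<And>t. a (t + T) = a t"
    and "\<delta> > 0"
    and a_incr: "\<And>s t. \<bar>s - t\<bar> \<le> \<delta> \<Longrightarrow> norm (a s - a t) \<le> K * \<bar>s - t\<bar>"
    and q_near: "\<And>t. norm (q t - c) \<le> B"
  shows "\<bar>integral {0..T} (\<lambda>t. qd t \<bullet> a t)\<bar> \<le> K * B * T"
proof -
  have q_cont: "continuous_on UNIV q"
    using lip by (rule lipschitz_on_continuous_on)
  define d where "d k = min T \<delta> / real (Suc k)" for k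
  have d_pos: "0 < d k" for k
    using T \<open>\<delta> > 0\<close> by (simp add: d_def)
  have d_le: "d k \<le> T" "d k \<le> \<delta>" for k
    using T \<open>\<delta> > 0\<close> by (auto simp: d_def divide_le_eq intro: order_trans[OF min.cobounded1]
        order_trans[OF min.cobounded2])
  have d_lim: "d \<longlonglongrightarrow> 0"
    unfolding d_def by (rule LIMSEQ_Suc[OF lim_const_over_n])
  have bound: "\<bar>integral {0..T} (\<lambda>t. ((q (t + d k) - q t) /\<^sub>R d k) \<bullet> a t)\<bar> \<le> K * B * T" for k
  proof -
    have a_incr_k: "norm (a t - a (t + d k)) \<le> K * d k" for t
      using a_incr[of t "t + d k"] d_pos[of k] d_le[of k] by simp
    have "\<bar>integral {0..T} (\<lambda>t. ((q (t + d k) - q t) /\<^sub>R d k) \<bullet> a t)\<bar>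
        = \<bar>integral {0..T} (\<lambda>t. (q (t + d k) - q t) \<bullet> a t)\<bar> / d k"
      using d_pos[of k] by (simp add: abs_mult divide_inverse_commute)
    also have "\<dots> \<le> K * B * T * d k / d k"
      using periodic_difference_inner_integral_le[OF q_cont a_cont q_per a_per a_incr_k q_near]
        d_pos[of k] d_le[of k]
      by (intro divide_right_mono) auto
    finally show ?thesis
      using d_pos[of k] by simp
  qed
  show ?thesis
    using tendsto_rabs[OF lipschitz_integral_inner_difference_quotient_tendsto[OF lip der a_cont d_lim d_pos]]
    by (rule tendsto_upperbound) (use bound in auto)
qed

lemma onorm_prod_real_le:
  fixes f :: "real \<times> 'a::real_normed_vector \<Rightarrow> 'b::real_normed_vector"
  assumes "bounded_linear f"
  shows "onorm f \<le> norm (f (1, 0)) + onorm (\<lambda>h. f (0, h))"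
proof (rule onorm_bound)
  interpret f: bounded_linear f by fact
  have f0: "bounded_linear (\<lambda>h. f (0, h))"
    by (intro bounded_linear_compose[OF assms] bounded_linear_Pair bounded_linear_zero bounded_linear_ident)
  show "0 \<le> norm (f (1, 0)) + onorm (\<lambda>h. f (0, h))"
    using onorm_pos_le[OF f0] by simp
  fix v :: "real \<times> 'a"
  obtain \<tau> h where v: "v = (\<tau>, h)"
    by fastforce
  have "f v = \<tau> *\<^sub>R f (1, 0) + f (0, h)"
    unfolding v by (simp add: f.scaleR[symmetric] f.add[symmetric])
  then have "norm (f v) \<le> \<bar>\<tau>\<bar> * norm (f (1, 0)) + onorm (\<lambda>h. f (0, h)) * norm h"
    using onorm[OF f0, of h] norm_triangle_ineq[of "\<tau> *\<^sub>R f (1, 0)" "f (0, h)"] by simp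
  also have "\<dots> \<le> norm v * norm (f (1, 0)) + onorm (\<lambda>h. f (0, h)) * norm v"
    using norm_fst_le[of \<tau> h] norm_snd_le[of h \<tau>] onorm_pos_le[OF f0] unfolding v
    by (intro add_mono mult_right_mono mult_left_mono) auto
  finally show "norm (f v) \<le> (norm (f (1, 0)) + onorm (\<lambda>h. f (0, h))) * norm v"
    by (simp add: algebra_simps)
qed

lemma class_A_continuous:
  assumes "class_A T A"
  shows "continuous_on UNIV (\<lambda>p. A (fst p) (snd p))"
proof -
  obtain D :: "real \<times> (real^3) \<Rightarrow> (real \<times> (real^3)) \<Rightarrow>\<^sub>L (real^3)"
    where "\<forall>p. ((\<lambda>p. A (fst p) (snd p)) has_derivative blinfun_apply (D p)) (at p)"
    using assms unfolding class_A_def by blast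
  then show ?thesis
    by (intro continuous_at_imp_continuous_on ballI has_derivative_continuous) blast
qed

lemma class_A_increment_le:
  assumes "class_A T A" and "e > 0"
  obtains R where "\<And>t1 t2 x1 x2. R \<le> norm x1 \<Longrightarrow> norm (x2 - x1) \<le> 1 \<Longrightarrow>
    norm (A t2 x2 - A t1 x1) \<le> e * (\<bar>t2 - t1\<bar> + norm (x2 - x1))"
proof -
  obtain D :: "real \<times> (real^3) \<Rightarrow> (real \<times> (real^3)) \<Rightarrow>\<^sub>L (real^3)" where
    deriv: "\<And>p. ((\<lambda>p. A (fst p) (snd p)) has_derivative blinfun_apply (D p)) (at p)" and
    decay: "\<forall>e>0. \<exists>R. \<forall>t x. norm x \<ge> R \<longrightarrow>
      norm (blinfun_apply (D (t, x)) (1, 0)) + onorm (\<lambda>h. blinfun_apply (D (t, x)) (0, h)) < e"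
    using assms(1) unfolding class_A_def by blast
  obtain R where small: "\<And>t x. R \<le> norm x \<Longrightarrow>
      norm (blinfun_apply (D (t, x)) (1, 0)) + onorm (\<lambda>h. blinfun_apply (D (t, x)) (0, h)) < e"
    using decay assms(2) by blast
  have "norm (A t2 x2 - A t1 x1) \<le> e * (\<bar>t2 - t1\<bar> + norm (x2 - x1))"
    if x1: "R + 1 \<le> norm x1" and x2: "norm (x2 - x1) \<le> 1" for t1 t2 x1 x2
  proof -
    define S where "S = (UNIV :: real set) \<times> cball x1 1"
    have D_le: "onorm (blinfun_apply (D p)) \<le> e" if "p \<in> S" for p
    proof -
      obtain t x where p: "p = (t, x)"
        by fastforce
      have "R \<le> norm x"
        using that x1 norm_triangle_ineq2[of x1 x] by (simp add: S_def p dist_norm)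
      then show ?thesis
        using onorm_prod_real_le[OF blinfun.bounded_linear_right, of "D p"] small[of x t]
        unfolding p by linarith
    qed
    have "norm ((\<lambda>p. A (fst p) (snd p)) (t2, x2) - (\<lambda>p. A (fst p) (snd p)) (t1, x1))
        \<le> e * norm ((t2, x2) - (t1, x1))"
      by (rule differentiable_bound[OF _ has_derivative_at_withinI[OF deriv] D_le])
        (use x2 in \<open>auto simp: S_def convex_Times dist_norm norm_minus_commute\<close>)
    also have "\<dots> \<le> e * (\<bar>t2 - t1\<bar> + norm (x2 - x1))"
      using norm_Pair_le[of "t2 - t1" "x2 - x1"] assms(2) by simp
    finally show ?thesis
      by simp
  qed
  then show ?thesis
    using that by blast
qed

lemma in_K_class_A_integral_le:
  assumes T: "T > 0" and A: "class_A T A" and "e > 0"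
    and A_incr: "\<And>t1 t2 x1 x2. R \<le> norm x1 \<Longrightarrow> norm (x2 - x1) \<le> 1 \<Longrightarrow>
      norm (A t2 x2 - A t1 x1) \<le> e * (\<bar>t2 - t1\<bar> + norm (x2 - x1))"
    and q: "in_K T q qd" and far: "R + T \<le> norm (mean T q)"
  shows "\<bar>integral {0..T} (\<lambda>t. qd t \<bullet> A t (q t))\<bar> \<le> 2 * e * T * T"
proof -
  have lip: "1-lipschitz_on UNIV q"
    by (rule in_K_lipschitz[OF q])
  have q_per: "\<And>t. q (t + T) = q t" and der: "AE t in lebesgue. (q has_vector_derivative qd t) (at t)"
    using q unfolding in_K_def by blast+
  have A_per: "\<And>t x. A (t + T) x = A t x"
    using A unfolding class_A_def by blast
  have q_near: "norm (q t - mean T q) \<le> 1 * T" for t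
    by (rule lipschitz_periodic_dist_mean_le[OF T lip q_per])
  have q_far: "R \<le> norm (q t)" for t
    using q_near[of t] far norm_triangle_ineq2[of "mean T q" "q t"] by (simp add: norm_minus_commute)
  have "continuous_on UNIV (\<lambda>t. A (fst (t, q t)) (snd (t, q t)))"
    by (rule continuous_on_compose2[OF class_A_continuous[OF A]])
      (auto intro!: continuous_intros lipschitz_on_continuous_on[OF lip])
  then have a_cont: "continuous_on UNIV (\<lambda>t. A t (q t))"
    by simp
  have a_per: "A (t + T) (q (t + T)) = A t (q t)" for t
    using A_per q_per by simp
  have a_incr: "norm (A s (q s) - A t (q t)) \<le> 2 * e * \<bar>s - t\<bar>" if "\<bar>s - t\<bar> \<le> 1" for s t
  proof -
    have q_incr: "norm (q s - q t) \<le> \<bar>s - t\<bar>"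
      using lipschitz_onD[OF lip, of s t] by (simp add: dist_norm)
    have "norm (A s (q s) - A t (q t)) \<le> e * (\<bar>s - t\<bar> + norm (q s - q t))"
      by (rule A_incr[OF q_far]) (use q_incr that in simp)
    also have "\<dots> \<le> 2 * e * \<bar>s - t\<bar>"
      using q_incr \<open>e > 0\<close> by simp
    finally show ?thesis .
  qed
  show ?thesis
    using periodic_integral_inner_derivative_le[OF T lip q_per der a_cont a_per zero_less_one a_incr q_near]
    by (simp add: mult.assoc)
qed

theorem mainTheorem7:
  fixes T :: real and A :: "real \<Rightarrow> real^3 \<Rightarrow> real^3"
    and q qd :: "nat \<Rightarrow> real \<Rightarrow> real^3"
  assumes "T > 0"
    and "class_A T A"
    and "\<And>n. in_K T (q n) (qd n)"
    and "filterlim (\<lambda>n. norm (mean T (q n))) at_top sequentially"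
  shows "(\<lambda>n. integral {0..T} (\<lambda>t. qd n t \<bullet> A t (q n t))) \<longlonglongrightarrow> 0"
proof (rule LIMSEQ_I)
  fix r :: real
  assume "r > 0"
  define e where "e = r / (4 * T * T)"
  have "e > 0" and "2 * e * T * T < r"
    using \<open>r > 0\<close> \<open>T > 0\<close> by (simp_all add: e_def)
  obtain R where A_incr: "\<And>t1 t2 x1 x2. R \<le> norm x1 \<Longrightarrow> norm (x2 - x1) \<le> 1 \<Longrightarrow>
      norm (A t2 x2 - A t1 x1) \<le> e * (\<bar>t2 - t1\<bar> + norm (x2 - x1))"
    using class_A_increment_le[OF assms(2) \<open>e > 0\<close>] by blast
  obtain N where far: "\<And>n. N \<le> n \<Longrightarrow> R + T \<le> norm (mean T (q n))"
    using assms(4) unfolding filterlim_at_top eventually_sequentially by blast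
  have "\<bar>integral {0..T} (\<lambda>t. qd n t \<bullet> A t (q n t))\<bar> < r" if "N \<le> n" for n
    using in_K_class_A_integral_le[OF assms(1,2) \<open>e > 0\<close> A_incr assms(3) far[OF that]]
      \<open>2 * e * T * T < r\<close>
    by linarith
  then show "\<exists>N. \<forall>n\<ge>N. norm (integral {0..T} (\<lambda>t. qd n t \<bullet> A t (q n t)) - 0) < r"
    by auto
qed

end
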